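(* For every $R>0$ there exists $\eta>0$ such that for every $\delta\in\mathcal{V}_R$ satisfying $\sup\{|\delta(x)|: x\in\mathcal{K}_1\}<\eta$, the point $0$ is the unique equilibrium point of the vector field $F_{\lambda+\delta}$ lying in $\mathcal{K}_1$.
   Context: Let $n\ge1$, $A,B\in\mathrm{End}(\mathbb{R}^n)$, $b\in\mathbb{R}^n$, $A_u=A+uB$. For $\mu:\mathbb{R}^n\to\mathbb{R}$, $F_\mu$ is the vector field $F_\mu(x)=A_{\mu(x)}x+b\mu(x)$ on $\mathbb{R}^n$. Let $\lambda\in C^\infty(\mathbb{R}^n,\mathbb{R})$ with $\lambda(0)=0$ be such that $0$ is an asymptotically stable equilibrium of $F_\lambda$ with open domain of attraction $D(\lambda)$. Let $\mathcal{K}_1$ be a (semi-algebraic) compact subset of $D(\lambda)$. For $R>0$, $\mathcal{V}_R=\{\delta\in C^\infty(\mathbb{R}^n,\mathbb{R}):\delta(x)=0\ \forall x\in B(0,R)\}$. *)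

theory Defs
  imports "HOL-Analysis.Analysis"
begin

fun pderivs :: "'n::finite list \<Rightarrow> (real^'n \<Rightarrow> real) \<Rightarrow> real^'n \<Rightarrow> real" where
  "pderivs [] f = f"
| "pderivs (i # is) f = (\<lambda>x. deriv (\<lambda>t. pderivs is f (x + t *\<^sub>R axis i 1)) 0)"

definition smooth_fun :: "(real^'n::finite \<Rightarrow> real) \<Rightarrow> bool" where
  "smooth_fun f \<longleftrightarrow>
     (\<forall>is. continuous_on UNIV (pderivs is f) \<and>
        (\<forall>i x. (\<lambda>t. pderivs is f (x + t *\<^sub>R axis i 1)) differentiable (at 0)))"

inductive_set polyfun :: "(real^'n::finite \<Rightarrow> real) set" where
  const: "(\<lambda>x. c) \<in> polyfun"
| coord: "(\<lambda>x. x $ i) \<in> polyfun"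
| add: "p \<in> polyfun \<Longrightarrow> q \<in> polyfun \<Longrightarrow> (\<lambda>x. p x + q x) \<in> polyfun"
| mult: "p \<in> polyfun \<Longrightarrow> q \<in> polyfun \<Longrightarrow> (\<lambda>x. p x * q x) \<in> polyfun"

text \<open>Finite union of basic sets {p = 0, q_1 > 0, ..., q_k > 0} (standard normal form).\<close>
definition semialgebraic :: "(real^'n::finite) set \<Rightarrow> bool" where
  "semialgebraic S \<longleftrightarrow>
     (\<exists>L :: ((real^'n \<Rightarrow> real) \<times> (real^'n \<Rightarrow> real) list) list.
        (\<forall>(p, qs) \<in> set L. p \<in> polyfun \<and> set qs \<subseteq> polyfun) \<and>
        S = (\<Union>(p, qs) \<in> set L. {x. p x = 0 \<and> (\<forall>q \<in> set qs. q x > 0)}))"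

definition Fmu :: "real^'n^'n \<Rightarrow> real^'n^'n \<Rightarrow> real^'n \<Rightarrow> (real^'n \<Rightarrow> real)
                    \<Rightarrow> real^'n \<Rightarrow> real^'n" where
  "Fmu A B b \<mu> x = (A + \<mu> x *\<^sub>R B) *v x + \<mu> x *\<^sub>R b"

definition sol_upto :: "('a::real_normed_vector \<Rightarrow> 'a) \<Rightarrow> (real \<Rightarrow> 'a) \<Rightarrow> real \<Rightarrow> bool" where
  "sol_upto F x T \<longleftrightarrow>
     (\<forall>t\<in>{0..<T}. (x has_vector_derivative F (x t)) (at t within {0..<T}))"

definition fwd_solution :: "('a::real_normed_vector \<Rightarrow> 'a) \<Rightarrow> (real \<Rightarrow> 'a) \<Rightarrow> bool" where
  "fwd_solution F x \<longleftrightarrow>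
     (\<forall>t\<ge>0. (x has_vector_derivative F (x t)) (at t within {0..}))"

definition lyapunov_stable0 :: "('a::real_normed_vector \<Rightarrow> 'a) \<Rightarrow> bool" where
  "lyapunov_stable0 F \<longleftrightarrow>
     (\<forall>\<epsilon>>0. \<exists>d>0. \<forall>x T. sol_upto F x T \<and> norm (x 0) < d \<longrightarrow>
        (\<forall>t\<in>{0..<T}. norm (x t) < \<epsilon>))"

definition domain_of_attraction :: "('a::real_normed_vector \<Rightarrow> 'a) \<Rightarrow> 'a set" where
  "domain_of_attraction F =
     {x0. \<exists>x. fwd_solution F x \<and> x 0 = x0 \<and> (x \<longlongrightarrow> 0) at_top}"

definition asymptotically_stable0 :: "('a::real_normed_vector \<Rightarrow> 'a) \<Rightarrow> bool" where
  "asymptotically_stable0 F \<longleftrightarrow>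
     F 0 = 0 \<and> lyapunov_stable0 F \<and> 0 \<in> interior (domain_of_attraction F)"

end

theory Submission
  imports Defs
begin

(* An equilibrium x0 of F_lam in the domain of attraction must be 0: F_lam is Lipschitz near x0,
   so every solution starting at x0 stays at x0, and the constant x0 tends to 0 only if x0 = 0.
   Hence F_lam does not vanish on the compact set K1 - B(0,R). Since
   F_(lam+delta) x = F_lam x + delta(x) (Bx + b), a perturbation with sup |delta| small on K1
   creates no equilibrium there, and on B(0,R) it vanishes identically. *)

lemma lipschitz_on_vector_derivative_bound:
  fixes x :: "real \<Rightarrow> 'a::real_normed_vector"
  assumes "convex I" "0 \<le> C"
    and "\<And>t. t \<in> I \<Longrightarrow> (x has_vector_derivative x' t) (at t within I)"
    and "\<And>t. t \<in> I \<Longrightarrow> norm (x' t) \<le> C"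
  shows "C-lipschitz_on I x"
proof (rule bounded_derivative_imp_lipschitz)
  fix t assume t: "t \<in> I"
  show "(x has_derivative (\<lambda>h. h *\<^sub>R x' t)) (at t within I)"
    using assms(3)[OF t] by (simp add: has_vector_derivative_def)
  show "onorm (\<lambda>h. h *\<^sub>R x' t) \<le> C"
    using assms(2) assms(4)[OF t]
    by (intro onorm_bound) (simp_all add: mult.commute[of C] mult_left_mono)
qed (use assms in auto)

lemma fwd_solution_continuous_within:
  assumes "fwd_solution F x" and "t \<ge> 0"
  shows "continuous (at t within {0..}) x"
  using assms unfolding fwd_solution_def by (blast intro: has_vector_derivative_continuous)

lemma fwd_solution_continuous_on:
  assumes "fwd_solution F x"
  shows "continuous_on {0..} x"
  using fwd_solution_continuous_within[OF assms]
  by (simp add: continuous_on_eq_continuous_within)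

lemma fwd_solution_eventually_at_equilibrium:
  fixes F :: "'a::real_normed_vector \<Rightarrow> 'a"
  assumes sol: "fwd_solution F x" and "t0 \<ge> 0" and "x t0 = x0" and "F x0 = 0"
    and "open U" and "x0 \<in> U" and lip: "L-lipschitz_on U F"
  shows "\<forall>\<^sub>F t in at t0 within {0..}. x t = x0"
proof -
  have "continuous (at t0 within {0..}) x"
    using fwd_solution_continuous_within[OF sol \<open>t0 \<ge> 0\<close>] .
  moreover obtain e where "e > 0" "ball x0 e \<subseteq> U"
    using \<open>open U\<close> \<open>x0 \<in> U\<close> open_contains_ball by blast
  ultimately obtain d where "d > 0" and d: "\<And>t. t \<ge> 0 \<Longrightarrow> dist t t0 < d \<Longrightarrow> x t \<in> U"
    using \<open>x t0 = x0\<close> unfolding continuous_within_eps_delta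
    by (metis atLeast_iff dist_commute mem_ball subsetD)
  define \<tau> where "\<tau> = min (d/2) (1 / (2*L + 1))"
  have "L \<ge> 0" using lipschitz_on_nonneg[OF lip] .
  then have "\<tau> > 0" "\<tau> < d" "L * \<tau> \<le> 1/2"
    using \<open>d > 0\<close> by (auto simp: \<tau>_def min_def field_simps)
  define I where "I = {0..} \<inter> cball t0 \<tau>"
  have "t0 \<in> I" "convex I" "compact I"
    using \<open>t0 \<ge> 0\<close> \<open>\<tau> > 0\<close> by (auto simp: I_def intro!: convex_Int closed_Int_compact)
  have in_U: "x t \<in> U" if "t \<in> I" for t
    using d that \<open>\<tau> < d\<close> by (auto simp: I_def dist_commute)
  have "continuous_on I (\<lambda>t. norm (x t - x0))"
    using fwd_solution_continuous_on[OF sol]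
    by (intro continuous_intros) (auto simp: I_def elim: continuous_on_subset)
  then obtain s where "s \<in> I" and s_max: "\<And>t. t \<in> I \<Longrightarrow> norm (x t - x0) \<le> norm (x s - x0)"
    using continuous_attains_sup[OF \<open>compact I\<close>] \<open>t0 \<in> I\<close> by blast
  define M where "M = norm (x s - x0)"
  \<comment> \<open>The Lipschitz bound on F forces M \<le> L M \<tau> \<le> M/2.\<close>
  have "(L * M)-lipschitz_on I x"
  proof (rule lipschitz_on_vector_derivative_bound)
    fix t assume "t \<in> I"
    then show "(x has_vector_derivative F (x t)) (at t within I)"
      using sol by (auto simp: fwd_solution_def I_def intro: has_vector_derivative_within_subset)
    have "norm (F (x t)) = dist (F (x t)) (F x0)"
      using \<open>F x0 = 0\<close> by simp
    also have "\<dots> \<le> L * dist (x t) x0"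
      using lipschitz_onD[OF lip in_U[OF \<open>t \<in> I\<close>] \<open>x0 \<in> U\<close>] .
    also have "\<dots> \<le> L * M"
      using s_max[OF \<open>t \<in> I\<close>] \<open>L \<ge> 0\<close> by (simp add: M_def dist_norm mult_left_mono)
    finally show "norm (F (x t)) \<le> L * M" .
  qed (use \<open>convex I\<close> \<open>L \<ge> 0\<close> M_def in auto)
  then have "M \<le> L * M * dist s t0"
    using lipschitz_onD[of "L * M" I x s t0] \<open>s \<in> I\<close> \<open>t0 \<in> I\<close> \<open>x t0 = x0\<close>
    by (simp add: M_def dist_norm)
  also have "\<dots> \<le> L * M * \<tau>"
    using \<open>s \<in> I\<close> \<open>L \<ge> 0\<close> by (intro mult_left_mono) (auto simp: I_def M_def dist_commute)
  also have "\<dots> \<le> M / 2"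
    using \<open>L * \<tau> \<le> 1/2\<close> mult_left_mono[of "L * \<tau>" "1/2" M] by (simp add: M_def ac_simps)
  finally have "\<forall>t\<in>I. x t = x0"
    using s_max by (simp add: M_def)
  moreover have "t \<in> I" if "t \<in> {0..}" and "dist t t0 < \<tau>" for t
    using that by (simp add: I_def dist_commute)
  ultimately show ?thesis
    using \<open>\<tau> > 0\<close> unfolding eventually_at by blast
qed

lemma fwd_solution_from_equilibrium:
  fixes F :: "'a::real_normed_vector \<Rightarrow> 'a"
  assumes sol: "fwd_solution F x" and "x 0 = x0" and "F x0 = 0"
    and "open U" and "x0 \<in> U" and "L-lipschitz_on U F" and "t \<ge> 0"
  shows "x t = x0"
proof -
  have "(x 0 = x0) = (x t = x0)"
  proof (rule connected_local_const[where f = "\<lambda>t. x t = x0"])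
    show "\<forall>s\<in>{0..}. \<forall>\<^sub>F t in at s within {0..}. (x s = x0) = (x t = x0)"
    proof
      fix s :: real assume "s \<in> {0..}"
      show "\<forall>\<^sub>F t in at s within {0..}. (x s = x0) = (x t = x0)"
      proof (cases "x s = x0")
        case True
        have "\<forall>\<^sub>F t in at s within {0..}. x t = x0"
          using \<open>s \<in> {0..}\<close>
          by (intro fwd_solution_eventually_at_equilibrium[OF sol _ True assms(3-6)]) simp
        then show ?thesis
          by (simp add: True)
      next
        case False
        have "continuous (at s within {0..}) x"
          using fwd_solution_continuous_within[OF sol] \<open>s \<in> {0..}\<close> by simp
        then have "\<forall>\<^sub>F t in at s within {0..}. x t \<noteq> x0"
          using False unfolding continuous_within by (rule tendsto_imp_eventually_ne)
        then show ?thesis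
          by (rule eventually_mono) (simp add: False)
      qed
    qed
  qed (use \<open>t \<ge> 0\<close> in auto)
  then show ?thesis
    using \<open>x 0 = x0\<close> by simp
qed

lemma domain_of_attraction_equilibrium_eq_0:
  fixes F :: "'a::real_normed_vector \<Rightarrow> 'a"
  assumes "x0 \<in> domain_of_attraction F" and "F x0 = 0"
    and "open U" and "x0 \<in> U" and "L-lipschitz_on U F"
  shows "x0 = 0"
proof -
  obtain x where sol: "fwd_solution F x" and "x 0 = x0" and lim: "(x \<longlongrightarrow> 0) at_top"
    using assms(1) unfolding domain_of_attraction_def by blast
  have "\<forall>\<^sub>F t in at_top. x t = x0"
    using eventually_ge_at_top[of "0::real"]
    by (rule eventually_mono) (rule fwd_solution_from_equilibrium[OF sol \<open>x 0 = x0\<close> assms(2-5)])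
  then have "(x \<longlongrightarrow> x0) at_top"
    by (rule tendsto_eventually)
  from tendsto_unique[OF trivial_limit_at_top_linorder this lim] show ?thesis .
qed

lemma smooth_fun_continuous_on_pderivs:
  assumes "smooth_fun f"
  shows "continuous_on S (pderivs is f)"
  using assms unfolding smooth_fun_def by (blast intro: continuous_on_subset)

lemma smooth_fun_continuous_on:
  assumes "smooth_fun f"
  shows "continuous_on S f"
  using smooth_fun_continuous_on_pderivs[OF assms, of S "[]"] by simp

lemma smooth_fun_has_partial_derivative:
  assumes "smooth_fun f"
  shows "((\<lambda>t. f (z + t *\<^sub>R axis i 1)) has_real_derivative pderivs [i] f (z + t *\<^sub>R axis i 1)) (at t)"
proof -
  let ?g = "\<lambda>s. f ((z + t *\<^sub>R axis i 1) + s *\<^sub>R axis i 1)"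
  have "?g differentiable (at 0)"
    using assms unfolding smooth_fun_def by (metis pderivs.simps(1))
  then have "(?g has_real_derivative pderivs [i] f (z + t *\<^sub>R axis i 1)) (at 0)"
    by (simp add: DERIV_deriv_iff_real_differentiable)
  moreover have "?g = (\<lambda>s. f (z + (s + t) *\<^sub>R axis i 1))"
    by (simp add: scaleR_add_left algebra_simps)
  ultimately show ?thesis
    using DERIV_shift[of "\<lambda>t. f (z + t *\<^sub>R axis i 1)" _ 0 t] by simp
qed

lemma smooth_fun_axis_difference_bound:
  assumes "smooth_fun f" and "convex S" and "z \<in> S" and "z + h *\<^sub>R axis i 1 \<in> S"
    and bound: "\<And>y. y \<in> S \<Longrightarrow> \<bar>pderivs [i] f y\<bar> \<le> M"
  shows "\<bar>f (z + h *\<^sub>R axis i 1) - f z\<bar> \<le> M * \<bar>h\<bar>"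
proof -
  have in_S: "z + t *\<^sub>R axis i 1 \<in> S" if t_seg: "t \<in> closed_segment 0 h" for t
  proof -
    obtain u where "0 \<le> u" "u \<le> 1" "t = u * h"
      using t_seg by (auto simp: in_segment)
    have "(1 - u) *\<^sub>R z + u *\<^sub>R (z + h *\<^sub>R axis i 1) \<in> S"
      using \<open>convex S\<close> \<open>z \<in> S\<close> \<open>z + h *\<^sub>R axis i 1 \<in> S\<close> \<open>0 \<le> u\<close> \<open>u \<le> 1\<close> by (rule convexD_alt)
    moreover have "(1 - u) *\<^sub>R z + u *\<^sub>R (z + h *\<^sub>R axis i 1) = z + t *\<^sub>R axis i 1"
      by (simp add: \<open>t = u * h\<close> algebra_simps)
    ultimately show ?thesis
      by simp
  qed
  have "0 \<le> M"
    using bound[OF \<open>z \<in> S\<close>] by linarith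
  have "M-lipschitz_on (closed_segment 0 h) (\<lambda>t. f (z + t *\<^sub>R axis i 1))"
  proof (rule lipschitz_on_vector_derivative_bound[OF convex_closed_segment \<open>0 \<le> M\<close>])
    fix t assume "t \<in> closed_segment 0 h"
    have "((\<lambda>t. f (z + t *\<^sub>R axis i 1)) has_vector_derivative pderivs [i] f (z + t *\<^sub>R axis i 1)) (at t)"
      using smooth_fun_has_partial_derivative[OF \<open>smooth_fun f\<close>]
      by (simp add: has_real_derivative_iff_has_vector_derivative)
    then show "((\<lambda>t. f (z + t *\<^sub>R axis i 1)) has_vector_derivative pderivs [i] f (z + t *\<^sub>R axis i 1))
        (at t within closed_segment 0 h)"
      by (rule has_vector_derivative_at_within)
    show "norm (pderivs [i] f (z + t *\<^sub>R axis i 1)) \<le> M"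
      using bound[OF in_S[OF \<open>t \<in> closed_segment 0 h\<close>]] by simp
  qed
  then have "dist (f (z + h *\<^sub>R axis i 1)) (f (z + 0 *\<^sub>R axis i 1)) \<le> M * dist h 0"
    by (rule lipschitz_onD) simp_all
  then show ?thesis
    by (simp add: dist_real_def)
qed

lemma smooth_fun_coordinate_difference_bound:
  fixes f :: "real^'n \<Rightarrow> real"
  assumes "smooth_fun f" and "z \<in> cbox lo hi" and "w \<in> cbox lo hi"
    and "\<forall>j. j \<notin> S \<longrightarrow> z $ j = w $ j"
    and bound: "\<And>i y. y \<in> cbox lo hi \<Longrightarrow> \<bar>pderivs [i] f y\<bar> \<le> M"
  shows "\<bar>f z - f w\<bar> \<le> M * (\<Sum>j\<in>S. \<bar>z $ j - w $ j\<bar>)"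
proof -
  have "finite S" by simp
  then show ?thesis
    using assms(2-4)
  proof (induction S arbitrary: z rule: finite_induct)
    case empty
    then have "z = w"
      by (simp add: vec_eq_iff)
    then show ?case
      by simp
  next
    case (insert i S)
    define z' where "z' = z + (w $ i - z $ i) *\<^sub>R axis i 1"
    have z'_nth: "z' $ j = (if j = i then w $ i else z $ j)" for j
      by (simp add: z'_def axis_def)
    have "z' \<in> cbox lo hi"
      using insert.prems(1,2) by (auto simp: mem_box_cart z'_nth)
    have "\<bar>f z' - f z\<bar> \<le> M * \<bar>z $ i - w $ i\<bar>"
      using smooth_fun_axis_difference_bound[OF \<open>smooth_fun f\<close> convex_box(1) insert.prems(1),
          of "w $ i - z $ i" i M] \<open>z' \<in> cbox lo hi\<close> bound
      by (simp add: z'_def abs_minus_commute)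
    moreover have "\<bar>f z' - f w\<bar> \<le> M * (\<Sum>j\<in>S. \<bar>z' $ j - w $ j\<bar>)"
      using insert.prems(3) by (intro insert.IH \<open>z' \<in> cbox lo hi\<close> insert.prems(2)) (simp add: z'_nth)
    moreover have "(\<Sum>j\<in>S. \<bar>z' $ j - w $ j\<bar>) = (\<Sum>j\<in>S. \<bar>z $ j - w $ j\<bar>)"
      using \<open>i \<notin> S\<close> by (intro sum.cong) (auto simp: z'_nth)
    ultimately show ?case
      using insert.hyps by (simp add: distrib_left)
  qed
qed

lemma smooth_fun_lipschitz_on_cbox:
  fixes f :: "real^'n \<Rightarrow> real"
  assumes "smooth_fun f"
  obtains C where "C-lipschitz_on (cbox lo hi) f"
proof -
  have "continuous_on (cbox lo hi) (\<lambda>y. \<Sum>i\<in>UNIV. \<bar>pderivs [i] f y\<bar>)"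
    by (intro continuous_intros smooth_fun_continuous_on_pderivs[OF assms])
  then have "bounded ((\<lambda>y. \<Sum>i\<in>UNIV. \<bar>pderivs [i] f y\<bar>) ` cbox lo hi)"
    by (intro compact_imp_bounded compact_continuous_image) auto
  then obtain M where "M > 0" and M: "\<And>y. y \<in> cbox lo hi \<Longrightarrow> (\<Sum>i\<in>UNIV. \<bar>pderivs [i] f y\<bar>) \<le> M"
    unfolding bounded_pos by fastforce
  have bound: "\<bar>pderivs [i] f y\<bar> \<le> M" if "y \<in> cbox lo hi" for i y
    using member_le_sum[of i UNIV "\<lambda>i. \<bar>pderivs [i] f y\<bar>"] M[OF that] by simp
  have "(M * CARD('n))-lipschitz_on (cbox lo hi) f"
  proof (rule lipschitz_onI)
    fix z w assume "z \<in> cbox lo hi" "w \<in> cbox lo hi"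
    have "(\<Sum>j\<in>UNIV. \<bar>z $ j - w $ j\<bar>) \<le> (\<Sum>j\<in>(UNIV::'n set). dist z w)"
      using component_le_norm_cart[of "z - w"] by (intro sum_mono) (simp add: dist_norm)
    then have "M * (\<Sum>j\<in>UNIV. \<bar>z $ j - w $ j\<bar>) \<le> M * CARD('n) * dist z w"
      using \<open>M > 0\<close> by (simp add: mult.assoc)
    then show "dist (f z) (f w) \<le> M * CARD('n) * dist z w"
      using smooth_fun_coordinate_difference_bound[OF assms \<open>z \<in> cbox lo hi\<close> \<open>w \<in> cbox lo hi\<close>,
          of UNIV M] bound
      by (simp add: dist_real_def)
  qed (use \<open>M > 0\<close> in simp)
  then show thesis ..
qed

lemma lipschitz_on_scaleR:
  fixes f :: "'a::metric_space \<Rightarrow> real" and g :: "'a \<Rightarrow> 'b::real_normed_vector"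
  assumes f: "C-lipschitz_on U f" and g: "D-lipschitz_on U g"
    and "0 \<le> P" and f_bound: "\<And>x. x \<in> U \<Longrightarrow> \<bar>f x\<bar> \<le> P"
    and "0 \<le> Q" and g_bound: "\<And>x. x \<in> U \<Longrightarrow> norm (g x) \<le> Q"
  shows "(C * Q + P * D)-lipschitz_on U (\<lambda>x. f x *\<^sub>R g x)"
proof (rule lipschitz_onI)
  fix x y assume "x \<in> U" "y \<in> U"
  have "f x *\<^sub>R g x - f y *\<^sub>R g y = (f x - f y) *\<^sub>R g x + f y *\<^sub>R (g x - g y)"
    by (simp add: algebra_simps)
  then have "dist (f x *\<^sub>R g x) (f y *\<^sub>R g y) \<le> \<bar>f x - f y\<bar> * norm (g x) + \<bar>f y\<bar> * norm (g x - g y)"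
    by (metis dist_norm norm_scaleR norm_triangle_ineq)
  also have "\<dots> \<le> (C * dist x y) * Q + P * (D * dist x y)"
    using lipschitz_onD[OF f \<open>x \<in> U\<close> \<open>y \<in> U\<close>] lipschitz_onD[OF g \<open>x \<in> U\<close> \<open>y \<in> U\<close>]
      f_bound[OF \<open>y \<in> U\<close>] g_bound[OF \<open>x \<in> U\<close>] \<open>0 \<le> P\<close>
    by (intro add_mono mult_mono) (auto simp: dist_real_def dist_norm)
  finally show "dist (f x *\<^sub>R g x) (f y *\<^sub>R g y) \<le> (C * Q + P * D) * dist x y"
    by (simp add: algebra_simps)
next
  show "0 \<le> C * Q + P * D"
    using lipschitz_on_nonneg[OF f] lipschitz_on_nonneg[OF g] \<open>0 \<le> P\<close> \<open>0 \<le> Q\<close> by simp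
qed

lemma Fmu_eq: "Fmu A B b \<mu> x = A *v x + \<mu> x *\<^sub>R (B *v x + b)"
  unfolding Fmu_def
  by (simp add: matrix_vector_mult_add_rdistrib scaleR_matrix_vector_assoc[symmetric] scaleR_add_right)

lemma continuous_on_Fmu:
  assumes "continuous_on S \<mu>"
  shows "continuous_on S (Fmu A B b \<mu>)"
  unfolding Fmu_eq[abs_def] by (intro continuous_intros assms)

lemma Fmu_lipschitz_on_cbox:
  fixes A B :: "real^'n^'n" and b :: "real^'n"
  assumes "smooth_fun \<mu>"
  obtains L where "L-lipschitz_on (cbox lo hi) (Fmu A B b \<mu>)"
proof -
  obtain C where "C-lipschitz_on (cbox lo hi) \<mu>"
    using smooth_fun_lipschitz_on_cbox[OF assms] .
  obtain KA where "KA-lipschitz_on (cbox lo hi) ((*v) A)"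
    using bounded_linear.lipschitz_boundE[OF matrix_vector_mul_bounded_linear] .
  obtain KB where "KB-lipschitz_on (cbox lo hi) ((*v) B)"
    using bounded_linear.lipschitz_boundE[OF matrix_vector_mul_bounded_linear] .
  have cont_affine: "continuous_on (cbox lo hi) (\<lambda>y. B *v y + b)"
    by (intro continuous_intros)
  obtain P where "P > 0" "\<And>y. y \<in> cbox lo hi \<Longrightarrow> \<bar>\<mu> y\<bar> \<le> P"
    using compact_imp_bounded[OF compact_continuous_image[OF smooth_fun_continuous_on[OF assms]
          compact_cbox[of lo hi]]]
    unfolding bounded_pos by fastforce
  moreover obtain Q where "Q > 0" "\<And>y. y \<in> cbox lo hi \<Longrightarrow> norm (B *v y + b) \<le> Q"
    using compact_imp_bounded[OF compact_continuous_image[OF cont_affine compact_cbox]]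
    unfolding bounded_pos by fastforce
  ultimately have "(KA + (C * Q + P * (KB + 0)))-lipschitz_on (cbox lo hi) (Fmu A B b \<mu>)"
    unfolding Fmu_eq[abs_def]
    by (intro lipschitz_on_add lipschitz_on_scaleR lipschitz_on_constant \<open>C-lipschitz_on _ \<mu>\<close>
        \<open>KA-lipschitz_on _ _\<close> \<open>KB-lipschitz_on _ _\<close>) auto
  then show thesis ..
qed

lemma Fmu_domain_of_attraction_equilibrium_eq_0:
  fixes A B :: "real^'n^'n" and b :: "real^'n"
  assumes "smooth_fun \<mu>" and "Fmu A B b \<mu> x0 = 0"
    and "x0 \<in> domain_of_attraction (Fmu A B b \<mu>)"
  shows "x0 = 0"
proof -
  obtain L where "L-lipschitz_on (cbox (x0 - vec 1) (x0 + vec 1)) (Fmu A B b \<mu>)"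
    using Fmu_lipschitz_on_cbox[OF assms(1)] .
  then have "L-lipschitz_on (box (x0 - vec 1) (x0 + vec 1)) (Fmu A B b \<mu>)"
    by (rule lipschitz_on_subset) (rule box_subset_cbox)
  moreover have "x0 \<in> box (x0 - vec 1) (x0 + vec 1)"
    by (simp add: mem_box_cart)
  ultimately show ?thesis
    using domain_of_attraction_equilibrium_eq_0[OF assms(3,2)] by blast
qed

lemma compact_norm_lower_bound:
  fixes f :: "'a::topological_space \<Rightarrow> 'b::real_normed_vector"
  assumes "compact K" and "continuous_on K f" and "\<And>x. x \<in> K \<Longrightarrow> f x \<noteq> 0"
  obtains m where "m > 0" and "\<And>x. x \<in> K \<Longrightarrow> m \<le> norm (f x)"
proof (cases "K = {}")
  case False
  have "continuous_on K (\<lambda>x. norm (f x))"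
    using assms(2) by (intro continuous_intros)
  then obtain x0 where "x0 \<in> K" "\<And>x. x \<in> K \<Longrightarrow> norm (f x0) \<le> norm (f x)"
    using continuous_attains_inf[OF \<open>compact K\<close> False] by blast
  then show thesis
    using that[of "norm (f x0)"] assms(3) by simp
qed (use that[of 1] in simp)

lemma compact_continuous_abs_le_SUP:
  fixes g :: "'a::topological_space \<Rightarrow> real"
  assumes "compact K" and "continuous_on K g" and "x \<in> K"
  shows "\<bar>g x\<bar> \<le> (SUP y\<in>K. \<bar>g y\<bar>)"
proof (rule cSUP_upper[OF \<open>x \<in> K\<close>])
  have "continuous_on K (\<lambda>y. \<bar>g y\<bar>)"
    using assms(2) by (rule continuous_on_rabs)
  then show "bdd_above ((\<lambda>y. \<bar>g y\<bar>) ` K)"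
    using \<open>compact K\<close> by (intro bounded_imp_bdd_above compact_imp_bounded compact_continuous_image)
qed

lemma compact_nonvanishing_under_small_perturbation:
  fixes F g :: "'a::topological_space \<Rightarrow> 'b::real_normed_vector"
  assumes "compact K" and "continuous_on K F" and "continuous_on K g"
    and "\<And>x. x \<in> K \<Longrightarrow> F x \<noteq> 0"
  obtains \<eta> where "\<eta> > 0" and "\<And>x c. x \<in> K \<Longrightarrow> \<bar>c\<bar> < \<eta> \<Longrightarrow> F x + c *\<^sub>R g x \<noteq> 0"
proof -
  obtain m where "m > 0" and m: "\<And>x. x \<in> K \<Longrightarrow> m \<le> norm (F x)"
    using compact_norm_lower_bound[OF assms(1,2,4)] by blast
  from compact_imp_bounded[OF compact_continuous_image[OF assms(3,1)]]
  obtain M where "M > 0" and M: "\<And>x. x \<in> K \<Longrightarrow> norm (g x) \<le> M"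
    unfolding bounded_pos by blast
  have "F x + c *\<^sub>R g x \<noteq> 0" if "x \<in> K" and "\<bar>c\<bar> < m / M" for x c
  proof
    assume "F x + c *\<^sub>R g x = 0"
    then have "norm (F x) = \<bar>c\<bar> * norm (g x)"
      by (simp add: add_eq_0_iff2)
    also have "\<dots> \<le> \<bar>c\<bar> * M"
      using M[OF \<open>x \<in> K\<close>] by (simp add: mult_left_mono)
    also have "\<dots> < m / M * M"
      using \<open>\<bar>c\<bar> < m / M\<close> \<open>M > 0\<close> by (rule mult_strict_right_mono)
    also have "\<dots> = m"
      using \<open>M > 0\<close> by simp
    finally show False
      using m[OF \<open>x \<in> K\<close>] by simp
  qed
  moreover have "m / M > 0"
    using \<open>m > 0\<close> \<open>M > 0\<close> by simp
  ultimately show thesis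
    using that by blast
qed

lemma Fmu_add:
  "Fmu A B b (\<lambda>x. \<mu> x + \<delta> x) x = Fmu A B b \<mu> x + \<delta> x *\<^sub>R (B *v x + b)"
  by (simp add: Fmu_eq scaleR_add_left)

theorem lemma4:
  fixes A B :: "real^'n^'n" and b :: "real^'n"
    and lam :: "real^'n \<Rightarrow> real" and K1 :: "(real^'n) set"
  assumes "smooth_fun lam" and "lam 0 = 0"
    and "asymptotically_stable0 (Fmu A B b lam)"
    and "open (domain_of_attraction (Fmu A B b lam))"
    and "compact K1" and "semialgebraic K1"
    and "K1 \<subseteq> domain_of_attraction (Fmu A B b lam)"
    and "R > 0"
  shows "\<exists>\<eta>>0. \<forall>\<delta>. smooth_fun \<delta> \<and> (\<forall>x\<in>ball 0 R. \<delta> x = 0)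
            \<and> (SUP x\<in>K1. \<bar>\<delta> x\<bar>) < \<eta> \<longrightarrow>
            (\<forall>x\<in>K1. Fmu A B b (\<lambda>x. lam x + \<delta> x) x = 0 \<longrightarrow> x = 0)"
proof -
  have no_other_equilibrium: "x = 0" if "x \<in> K1" and "Fmu A B b lam x = 0" for x
    using Fmu_domain_of_attraction_equilibrium_eq_0[OF \<open>smooth_fun lam\<close> that(2)] assms(7) that(1)
    by blast
  have "compact (K1 - ball 0 R)"
    using \<open>compact K1\<close> by (rule compact_diff) simp
  moreover have "continuous_on (K1 - ball 0 R) (Fmu A B b lam)"
    using smooth_fun_continuous_on[OF \<open>smooth_fun lam\<close>] by (rule continuous_on_Fmu)
  moreover have "continuous_on (K1 - ball 0 R) (\<lambda>x. B *v x + b)"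
    by (intro continuous_intros)
  moreover have "Fmu A B b lam x \<noteq> 0" if "x \<in> K1 - ball 0 R" for x
    using that no_other_equilibrium[of x] \<open>R > 0\<close> by force
  ultimately obtain \<eta> where "\<eta> > 0" and \<eta>:
      "\<And>x c. x \<in> K1 - ball 0 R \<Longrightarrow> \<bar>c\<bar> < \<eta> \<Longrightarrow> Fmu A B b lam x + c *\<^sub>R (B *v x + b) \<noteq> 0"
    using compact_nonvanishing_under_small_perturbation by blast
  show ?thesis
  proof (intro exI[of _ \<eta>] conjI allI impI ballI)
    fix \<delta> x
    assume \<delta>: "smooth_fun \<delta> \<and> (\<forall>x\<in>ball 0 R. \<delta> x = 0) \<and> (SUP x\<in>K1. \<bar>\<delta> x\<bar>) < \<eta>"
      and "x \<in> K1" and "Fmu A B b (\<lambda>x. lam x + \<delta> x) x = 0"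
    then have perturbed: "Fmu A B b lam x + \<delta> x *\<^sub>R (B *v x + b) = 0"
      by (simp add: Fmu_add)
    have "\<bar>\<delta> x\<bar> \<le> (SUP x\<in>K1. \<bar>\<delta> x\<bar>)"
      using \<delta> by (intro compact_continuous_abs_le_SUP \<open>compact K1\<close> smooth_fun_continuous_on \<open>x \<in> K1\<close>) simp
    with \<delta> have "\<bar>\<delta> x\<bar> < \<eta>"
      by linarith
    with \<eta>[of x "\<delta> x"] perturbed \<open>x \<in> K1\<close> have "x \<in> ball 0 R"
      by blast
    with \<delta> perturbed have "Fmu A B b lam x = 0"
      by simp
    with \<open>x \<in> K1\<close> show "x = 0"
      by (rule no_other_equilibrium)
  qed (rule \<open>\<eta> > 0\<close>)
qed

end
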